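(* Consider the algorithm (Algorithm 3 of the paper) which, for any noise-free protocol of transcript length $L$ and any unknown number $T$ of adversarial bit flips, succeeds with high probability and, when successful, sends $L' = L + O\left(\sqrt{L(T+1)\log L} + T\right)$ bits. If the adversary flips $T = O(L)$ bits and the noise rate is $\epsilon = T/L'$, then this algorithm achieves a communication rate $L/L'$ of at least $1-O\left(\sqrt{\frac{\log L}{L}} + \sqrt{\epsilon \log L}\right)$.
   Context: Setting: Alice and Bob simulate a two-party protocol with transcript length $L$ (known to both) over a synchronous binary channel on which an adversary, who does not see the transmitted bits or the parties' private randomness, flips $T$ bits in total, with $T$ unknown to the parties. $L'$ denotes the total number of bits sent by the simulating algorithm; the communication rate is $L/L'$ and the (effective) noise rate is $\epsilon = T/L'$. *)

theory Defs
  imports Complex_Main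
begin

definition comm_rate :: "nat \<Rightarrow> nat \<Rightarrow> real" where
  "comm_rate L L' = real L / real L'"

definition noise_rate :: "nat \<Rightarrow> nat \<Rightarrow> real" where
  "noise_rate T L' = real T / real L'"

end

theory Submission
  imports Defs
begin

text \<open>If \<open>L' \<le> L\<close> the rate is at least 1. Otherwise \<open>L \<le> L'\<close>, and once
  \<open>ln L \<ge> 1\<close> each of the three overhead terms \<open>\<surd>(L ln L)\<close>, \<open>\<surd>(L T ln L)\<close> and \<open>T\<close> is at most
  \<open>L'\<close> times \<open>\<surd>(ln L / L)\<close> or \<open>\<surd>(\<epsilon> ln L)\<close> (using \<open>T \<le> L'\<close> for the last two). Hence
  \<open>L' - L \<le> 2C L' (\<surd>(ln L / L) + \<surd>(\<epsilon> ln L))\<close>; divide by \<open>L'\<close>.\<close>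

lemma sqrt_mult_eq_mult_sqrt_divide:
  fixes m y :: real
  assumes "0 < m" and "0 \<le> y"
  shows "sqrt (m * y) = m * sqrt (y / m)"
proof -
  have "sqrt (m * y) = sqrt (m\<^sup>2 * (y / m))"
    using assms by (simp add: power2_eq_square)
  also have "\<dots> = m * sqrt (y / m)"
    using assms by (subst real_sqrt_mult) simp
  finally show ?thesis .
qed

lemma overhead_le_sqrt_rates:
  fixes l l' t x :: real
  assumes "0 < l" and "l \<le> l'" and "0 \<le> t" and "t \<le> l'" and "1 \<le> x"
  shows "sqrt (l * (t + 1) * x) + t \<le> 2 * l' * (sqrt (x / l) + sqrt (t / l' * x))"
proof -
  have l': "0 < l'" using assms by linarith
  have B: "sqrt (l' * (t * x)) = l' * sqrt (t / l' * x)"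
    using sqrt_mult_eq_mult_sqrt_divide[OF l', of "t * x"] assms by simp
  have "sqrt (l * (t + 1) * x) \<le> sqrt (l * x) + sqrt (l * (t * x))"
    using sqrt_add_le_add_sqrt[of "l * x" "l * (t * x)"] assms
    by (simp add: algebra_simps)
  moreover have "sqrt (l * x) \<le> l' * sqrt (x / l)"
    using sqrt_mult_eq_mult_sqrt_divide[of l x] assms by (simp add: mult_right_mono)
  moreover have "sqrt (l * (t * x)) \<le> l' * sqrt (t / l' * x)"
    unfolding B[symmetric] using assms by (intro real_sqrt_le_mono mult_right_mono) auto
  moreover have "t \<le> l' * sqrt (t / l' * x)"
  proof -
    have "t * t \<le> l' * (t * x)"
      using assms by (intro mult_mono) (auto simp: mult_le_cancel_left1 order.trans[OF _ \<open>1 \<le> x\<close>])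
    then have "sqrt (t * t) \<le> sqrt (l' * (t * x))"
      by (rule real_sqrt_le_mono)
    then show ?thesis using assms B by simp
  qed
  moreover have "0 \<le> l' * sqrt (x / l)"
    using assms l' by simp
  ultimately show ?thesis by (simp add: algebra_simps)
qed

lemma rate_ge_of_overhead_le:
  fixes C l l' t x :: real
  assumes "0 \<le> C" and "0 < l" and "0 < l'" and "0 \<le> t" and "t \<le> l'" and "1 \<le> x"
    and "l' \<le> l + C * (sqrt (l * (t + 1) * x) + t)"
  shows "1 - 2 * C * (sqrt (x / l) + sqrt (t / l' * x)) \<le> l / l'"
proof (cases "l' \<le> l")
  case True
  then have "1 \<le> l / l'" using assms by simp
  moreover have "0 \<le> 2 * C * (sqrt (x / l) + sqrt (t / l' * x))"
    using assms by simp
  ultimately show ?thesis by linarith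
next
  case False
  have "l' - l \<le> C * (sqrt (l * (t + 1) * x) + t)"
    using assms(7) by linarith
  also have "\<dots> \<le> C * (2 * l' * (sqrt (x / l) + sqrt (t / l' * x)))"
    using overhead_le_sqrt_rates[of l l' t x] assms False by (intro mult_left_mono) auto
  finally have "(l' - l) / l' \<le> 2 * C * (sqrt (x / l) + sqrt (t / l' * x))"
    using assms by (simp add: divide_le_eq algebra_simps)
  then show ?thesis using assms by (simp add: diff_divide_distrib)
qed

lemma one_le_ln_of_nat:
  fixes L :: nat
  assumes "3 \<le> L"
  shows "1 \<le> ln (real L)"
proof -
  have "exp 1 \<le> real L" using exp_le assms by linarith
  then show ?thesis using assms by (subst ln_ge_iff) auto
qed

theorem theorem7:
  fixes C c :: real
  assumes "C > 0" and "c > 0"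
  shows "\<exists>C' > 0. \<exists>L0::nat. \<forall>L T L' :: nat.
           L \<ge> L0 \<and> 0 < L' \<and> T \<le> L' \<and> real T \<le> c * real L \<and>
           real L' \<le> real L + C * (sqrt (real L * (real T + 1) * ln (real L)) + real T)
           \<longrightarrow> comm_rate L L' \<ge>
               1 - C' * (sqrt (ln (real L) / real L) + sqrt (noise_rate T L' * ln (real L)))"
proof (intro exI[of _ "2 * C"] conjI exI[of _ 3] allI impI)
  fix L T L' :: nat
  assume "3 \<le> L \<and> 0 < L' \<and> T \<le> L' \<and> real T \<le> c * real L \<and>
    real L' \<le> real L + C * (sqrt (real L * (real T + 1) * ln (real L)) + real T)"
  then show "comm_rate L L' \<ge>
      1 - 2 * C * (sqrt (ln (real L) / real L) + sqrt (noise_rate T L' * ln (real L)))"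
    using rate_ge_of_overhead_le[of C "real L" "real L'" "real T" "ln (real L)"]
      one_le_ln_of_nat assms
    unfolding comm_rate_def noise_rate_def by auto
qed (use assms in simp)

end
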